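(* Let $q\in\mathbb{C}\setminus\{0\}$ with a fixed square root $q^{1/2}$, and let $D_x,D_y$ be invertible elements of an associative complex algebra satisfying $D_x^aD_y^b=q^{ab}D_y^bD_x^a$ for all $a,b\in\mathbb{Z}$. For $m=(m_1,m_2)\in\mathbb{Z}^2$ put $T_m=(q^{1/2})^{m_1m_2}D_y^{m_1}D_x^{m_2}$, and for $m,n\in\mathbb{Z}^2$ let $m\wedge n=m_1n_2-m_2n_1$. Define $[A,B]=AB-BA$ and, recursively for $n\ge3$, $$[A_1,\dots,A_n]=\sum_{s=1}^n(-1)^{s+1}A_s[A_1,\dots,\widehat{A_s},\dots,A_n].$$ Then for every $n\ge2$ and all $i_1,\dots,i_n\in\mathbb{Z}^2$, $$[T_{i_1},\dots,T_{i_n}]=\sum_{\sigma\in S_n}\mathrm{sgn}(\sigma)\,(q^{1/2})^{\sum_{1\le s<k\le n}i_{\sigma(k)}\wedge i_{\sigma(s)}}\;T_{i_1+\cdots+i_n}.$$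
   Context: The hat denotes omission of that entry. The elements $T_m$ satisfy $T_nT_m=(q^{1/2})^{m\wedge n}T_{n+m}$. *)

theory Defs
  imports Complex_Main "HOL-Combinatorics.Permutations"
begin

text \<open>A unital associative complex algebra is modelled as a ring with unit together
  with a unital ring homomorphism from the complex numbers into its centre
  (scalar multiplication c x is e c * x).\<close>
definition central_scalar_emb :: "(complex \<Rightarrow> 'a::ring_1) \<Rightarrow> bool" where
  "central_scalar_emb e \<longleftrightarrow> e 1 = 1 \<and> (\<forall>a b. e (a + b) = e a + e b)
     \<and> (\<forall>a b. e (a * b) = e a * e b) \<and> (\<forall>c x. e c * x = x * e c)"

definition zpow :: "'a::ring_1 \<Rightarrow> 'a \<Rightarrow> int \<Rightarrow> 'a" where
  "zpow D Dinv k = (if 0 \<le> k then D ^ nat k else Dinv ^ nat (- k))"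

definition wedge :: "int \<times> int \<Rightarrow> int \<times> int \<Rightarrow> int" where
  "wedge m n = fst m * snd n - snd m * fst n"

text \<open>The iterated bracket [A_1,...,A_n] (0-based indexing in the list).\<close>
function nbr :: "'a::ring_1 list \<Rightarrow> 'a" where
  "nbr xs = (if length xs < 2 then 0
     else if length xs = 2 then xs!0 * xs!1 - xs!1 * xs!0
     else (\<Sum>s<length xs. (-1) ^ s * (xs!s * nbr (take s xs @ drop (Suc s) xs))))"
  by pat_completeness auto
termination by (relation "measure length") auto

declare nbr.simps[simp del]

end

theory Submission
  imports Defs
begin

text \<open>The recursive bracket equals the alternating sum over all permutations \<open>\<sigma>\<close> of
  \<open>sgn \<sigma> \<cdot> A_\<sigma>(1) \<cdots> A_\<sigma>(n)\<close>: grouping the permutations by the index \<open>s\<close> they put first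
  reproduces the recursion, the sign \<open>(-1)^(s+1)\<close> being that of the cycle moving \<open>s\<close> to the
  front. In the quantum torus \<open>T_m T_p = (q^1/2)^(p \<and> m) T_(m+p)\<close>, so each ordered product of the
  \<open>T_i_k\<close> is a power of \<open>q^1/2\<close> times \<open>T_(i_1+\<dots>+i_n)\<close>, which gives the formula.\<close>

definition alternating_prod :: "'a::ring_1 list \<Rightarrow> 'a" where
  "alternating_prod xs = (\<Sum>\<sigma> | \<sigma> permutes {..<length xs}.
     of_int (sign \<sigma>) * prod_list (map (\<lambda>k. xs ! \<sigma> k) [0..<length xs]))"

text \<open>\<open>front_cycle s\<close> sends \<open>0\<close> to \<open>s\<close> and shifts \<open>1, \<dots>, s\<close> down by one; composed with
  \<open>shift_perm m \<tau>\<close> it lists position \<open>s\<close> first and the others in the order given by \<open>\<tau>\<close>.\<close>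

fun front_cycle :: "nat \<Rightarrow> nat \<Rightarrow> nat" where
  "front_cycle 0 = id"
| "front_cycle (Suc s) = Transposition.transpose s (Suc s) \<circ> front_cycle s"

lemma front_cycle_permutes: "front_cycle s permutes {..s}"
proof (induction s)
  case 0
  show ?case by (simp only: front_cycle.simps permutes_id)
next
  case (Suc s)
  have "front_cycle s permutes {..Suc s}"
    using Suc permutes_subset by fastforce
  moreover have "Transposition.transpose s (Suc s) permutes {..Suc s}"
    by (rule permutes_swap_id) auto
  ultimately show ?case
    unfolding front_cycle.simps(2) by (rule permutes_compose)
qed

lemma permutation_front_cycle: "permutation (front_cycle s)"
  using front_cycle_permutes permutes_imp_permutation by blast

lemma sign_front_cycle: "sign (front_cycle s) = (-1) ^ s"
proof (induction s)
  case (Suc s)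
  have "sign (Transposition.transpose s (Suc s) \<circ> front_cycle s)
      = sign (Transposition.transpose s (Suc s)) * sign (front_cycle s)"
    by (intro sign_compose permutation_swap_id permutation_front_cycle)
  then show ?case
    unfolding front_cycle.simps(2) Suc.IH sign_swap_id by (simp add: comp_def)
qed simp

lemma front_cycle_0: "front_cycle s 0 = s"
  by (induction s) (auto simp: Transposition.transpose_def)

lemma front_cycle_Suc: "front_cycle s (Suc j) = (if j < s then j else Suc j)"
  by (induction s) (auto simp: Transposition.transpose_def)

definition shift_perm :: "nat \<Rightarrow> (nat \<Rightarrow> nat) \<Rightarrow> nat \<Rightarrow> nat" where
  "shift_perm m \<tau> = map_permutation {..<m} Suc \<tau>"

lemma shift_perm_permutes_image:
  "\<tau> permutes {..<m} \<Longrightarrow> shift_perm m \<tau> permutes Suc ` {..<m}"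
  unfolding shift_perm_def by (simp add: map_permutation_permutes bij_betw_imageI)

lemma shift_perm_permutes:
  "\<tau> permutes {..<m} \<Longrightarrow> shift_perm m \<tau> permutes {..<Suc m}"
  by (rule permutes_subset[OF shift_perm_permutes_image]) auto

lemma shift_perm_0: "\<tau> permutes {..<m} \<Longrightarrow> shift_perm m \<tau> 0 = 0"
  by (rule permutes_not_in[OF shift_perm_permutes_image]) auto

lemma shift_perm_Suc: "k < m \<Longrightarrow> shift_perm m \<tau> (Suc k) = Suc (\<tau> k)"
  unfolding shift_perm_def by (simp add: map_permutation_apply)

lemma sign_shift_perm: "\<tau> permutes {..<m} \<Longrightarrow> sign (shift_perm m \<tau>) = sign \<tau>"
  unfolding shift_perm_def by (simp add: sign_map_permutation)

definition insert_front :: "nat \<Rightarrow> nat \<Rightarrow> (nat \<Rightarrow> nat) \<Rightarrow> nat \<Rightarrow> nat" where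
  "insert_front m s \<tau> = front_cycle s \<circ> shift_perm m \<tau>"

lemma insert_front_0: "\<tau> permutes {..<m} \<Longrightarrow> insert_front m s \<tau> 0 = s"
  by (simp add: insert_front_def shift_perm_0 front_cycle_0)

lemma insert_front_Suc:
  "k < m \<Longrightarrow> insert_front m s \<tau> (Suc k) = (if \<tau> k < s then \<tau> k else Suc (\<tau> k))"
  by (simp add: insert_front_def shift_perm_Suc front_cycle_Suc)

lemma insert_front_permutes:
  assumes "s < Suc m" "\<tau> permutes {..<m}"
  shows "insert_front m s \<tau> permutes {..<Suc m}"
proof -
  have "front_cycle s permutes {..<Suc m}"
    using assms(1) by (intro permutes_subset[OF front_cycle_permutes]) auto
  then show ?thesis
    unfolding insert_front_def using shift_perm_permutes[OF assms(2)] by (simp add: permutes_compose)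
qed

lemma sign_insert_front:
  assumes "\<tau> permutes {..<m}"
  shows "sign (insert_front m s \<tau>) = (-1) ^ s * sign \<tau>"
proof -
  have "permutation (shift_perm m \<tau>)"
    using assms shift_perm_permutes permutes_imp_permutation by blast
  with assms show ?thesis
    unfolding insert_front_def
    by (simp add: sign_compose permutation_front_cycle sign_front_cycle sign_shift_perm)
qed

lemma bij_betw_insert_front:
  "bij_betw (\<lambda>(s, \<tau>). insert_front m s \<tau>)
     ({..<Suc m} \<times> {\<tau>. \<tau> permutes {..<m}}) {\<sigma>. \<sigma> permutes {..<Suc m}}"
proof -
  let ?\<Phi> = "\<lambda>(s, \<tau>). insert_front m s \<tau>" and ?A = "{..<Suc m} \<times> {\<tau>. \<tau> permutes {..<m}}"
  have inj: "inj_on ?\<Phi> ?A"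
  proof (rule inj_onI, clarsimp)
    fix s \<tau> s' \<tau>'
    assume perms: "\<tau> permutes {..<m}" "\<tau>' permutes {..<m}"
      and eq: "insert_front m s \<tau> = insert_front m s' \<tau>'"
    have "s = s'"
      using eq insert_front_0[OF perms(1), of s] insert_front_0[OF perms(2), of s'] by metis
    moreover have "\<tau> k = \<tau>' k" for k
    proof (cases "k < m")
      case True
      then show ?thesis
        using fun_cong[OF eq, of "Suc k"] \<open>s = s'\<close> by (auto simp: insert_front_Suc split: if_splits)
    next
      case False
      then show ?thesis using perms by (simp add: permutes_not_in)
    qed
    ultimately show "s = s' \<and> \<tau> = \<tau>'" by auto
  qed
  have "?\<Phi> ` ?A \<subseteq> {\<sigma>. \<sigma> permutes {..<Suc m}}"
    using insert_front_permutes by auto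
  moreover have "card (?\<Phi> ` ?A) = card {\<sigma>. \<sigma> permutes {..<Suc m}}"
    using inj by (simp add: card_image card_cartesian_product card_permutations)
  ultimately have "?\<Phi> ` ?A = {\<sigma>. \<sigma> permutes {..<Suc m}}"
    by (simp add: card_subset_eq finite_permutations)
  with inj show ?thesis by (simp add: bij_betw_def)
qed

lemma alternating_prod_expand:
  fixes xs :: "'a::ring_1 list"
  assumes len: "length xs = Suc m"
  shows "alternating_prod xs
    = (\<Sum>s<Suc m. (-1) ^ s * (xs ! s * alternating_prod (take s xs @ drop (Suc s) xs)))"
proof -
  define summand where "summand \<sigma> = (of_int (sign \<sigma>) :: 'a) * prod_list (map (\<lambda>k. xs ! \<sigma> k) [0..<Suc m])"
    for \<sigma>
  have summand_insert_front: "summand (insert_front m s \<tau>)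
      = (-1) ^ s * (xs ! s * (of_int (sign \<tau>) *
          prod_list (map (\<lambda>k. (take s xs @ drop (Suc s) xs) ! \<tau> k) [0..<m])))"
    if s: "s < Suc m" and \<tau>: "\<tau> permutes {..<m}" for s \<tau>
  proof -
    have \<tau>_lt: "\<tau> k < m" if "k < m" for k
      using \<tau> that permutes_in_image by fastforce
    have removed_nth: "(take s xs @ drop (Suc s) xs) ! j = xs ! (if j < s then j else Suc j)"
      if "j < m" for j
      using that s len by (auto simp: nth_append min_def)
    have "map (\<lambda>k. xs ! insert_front m s \<tau> k) [0..<Suc m]
        = xs ! s # map (\<lambda>k. (take s xs @ drop (Suc s) xs) ! \<tau> k) [0..<m]"
      by (simp add: upt_conv_Cons map_Suc_upt[symmetric] insert_front_0[OF \<tau>] insert_front_Suc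
          removed_nth \<tau>_lt del: upt_Suc)
    then show ?thesis
      by (simp add: summand_def sign_insert_front[OF \<tau>] mult.assoc mult_of_int_commute)
  qed
  have "alternating_prod xs = sum summand {\<sigma>. \<sigma> permutes {..<Suc m}}"
    unfolding alternating_prod_def summand_def len ..
  also have "\<dots> = (\<Sum>(s, \<tau>) \<in> {..<Suc m} \<times> {\<tau>. \<tau> permutes {..<m}}. summand (insert_front m s \<tau>))"
    using sum.reindex_bij_betw[OF bij_betw_insert_front, of summand] by (simp add: case_prod_unfold)
  also have "\<dots> = (\<Sum>s<Suc m. (-1) ^ s * (xs ! s * alternating_prod (take s xs @ drop (Suc s) xs)))"
    unfolding sum.cartesian_product[symmetric]
  proof (rule sum.cong)
    fix s assume s: "s \<in> {..<Suc m}"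
    then have removed_length: "length (take s xs @ drop (Suc s) xs) = m"
      using len by auto
    from s show "(\<Sum>\<tau> | \<tau> permutes {..<m}. summand (insert_front m s \<tau>))
        = (-1) ^ s * (xs ! s * alternating_prod (take s xs @ drop (Suc s) xs))"
      unfolding alternating_prod_def removed_length
      by (simp add: summand_insert_front sum_distrib_left)
  qed simp
  finally show ?thesis .
qed

lemma alternating_prod_singleton: "alternating_prod [x] = x"
proof -
  have "{\<sigma>. \<sigma> permutes {..<Suc 0}} = {id}"
    by (auto simp: lessThan_Suc)
  then show ?thesis
    by (simp add: alternating_prod_def)
qed

lemma nbr_eq_alternating_prod: "length xs \<ge> 2 \<Longrightarrow> nbr xs = alternating_prod xs"
proof (induction "length xs" arbitrary: xs rule: less_induct)
  case less
  then obtain m where len: "length xs = Suc m" and "m \<ge> 1"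
    by (cases "length xs") auto
  show ?case
  proof (cases "m = 1")
    case True
    then obtain a b where "xs = [a, b]"
      using len by (cases xs; cases "tl xs") auto
    with True show ?thesis
      unfolding alternating_prod_expand[OF len]
      by (simp add: nbr.simps alternating_prod_singleton numeral_2_eq_2)
  next
    case False
    have "nbr xs = (\<Sum>s<Suc m. (-1) ^ s * (xs ! s * nbr (take s xs @ drop (Suc s) xs)))"
      using len False \<open>m \<ge> 1\<close> by (subst nbr.simps) simp
    also have "\<dots> = alternating_prod xs"
      unfolding alternating_prod_expand[OF len]
      using less.hyps len False \<open>m \<ge> 1\<close> by (intro sum.cong) auto
    finally show ?thesis .
  qed
qed

lemma alternating_prod_map_upt:
  "alternating_prod (map f [0..<n])
    = (\<Sum>\<sigma> | \<sigma> permutes {..<n}. of_int (sign \<sigma>) * prod_list (map (\<lambda>k. f (\<sigma> k)) [0..<n]))"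
  unfolding alternating_prod_def
proof (intro sum.cong)
  fix \<sigma> assume "\<sigma> \<in> {\<sigma>. \<sigma> permutes {..<n}}"
  then have "\<sigma> k < n" if "k < n" for k
    using that permutes_in_image by fastforce
  then have "map (\<lambda>k. map f [0..<n] ! \<sigma> k) [0..<n] = map (\<lambda>k. f (\<sigma> k)) [0..<n]"
    by (intro map_cong) auto
  moreover have "length (map f [0..<n]) = n"
    by simp
  ultimately show "of_int (sign \<sigma>) * prod_list (map (\<lambda>k. map f [0..<n] ! \<sigma> k) [0..<length (map f [0..<n])])
      = of_int (sign \<sigma>) * prod_list (map (\<lambda>k. f (\<sigma> k)) [0..<n])"
    by (simp only:)
qed simp

lemma central_scalar_embD:
  fixes e :: "complex \<Rightarrow> 'a::ring_1"
  assumes "central_scalar_emb e"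
  shows central_scalar_emb_one: "e 1 = 1"
    and central_scalar_emb_add: "e (a + b) = e a + e b"
    and central_scalar_emb_mult: "e (a * b) = e a * e b"
    and central_scalar_emb_commute: "e c * x = x * e c"
  using assms unfolding central_scalar_emb_def by blast+

lemma central_scalar_emb_of_int:
  fixes e :: "complex \<Rightarrow> 'a::ring_1"
  assumes emb: "central_scalar_emb e"
  shows "e (of_int k) = of_int k"
proof -
  have e0: "e 0 = 0"
    using central_scalar_emb_add[OF emb, of 0 0] by simp
  have e_minus: "e (- x) = - e x" for x
    using central_scalar_emb_add[OF emb, of x "- x"] e0 minus_unique[of "e x" "e (- x)"] by simp
  have e_of_nat: "e (of_nat n) = of_nat n" for n
    by (induction n) (simp_all add: e0 central_scalar_emb_add[OF emb] central_scalar_emb_one[OF emb])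
  show ?thesis
  proof (cases "k \<ge> 0")
    case True
    then show ?thesis using e_of_nat[of "nat k"] by simp
  next
    case False
    then show ?thesis using e_of_nat[of "nat (- k)"] e_minus[of "of_nat (nat (- k))"] by simp
  qed
qed

lemma power_mult_inverse_power:
  fixes D Di :: "'a::ring_1"
  assumes "D * Di = 1"
  shows "D ^ a * Di ^ c = (if c \<le> a then D ^ (a - c) else Di ^ (c - a))"
proof (induction c arbitrary: a)
  case (Suc c)
  have "D ^ a * Di ^ Suc c = (D ^ a * Di ^ c) * Di"
    by (simp only: power_Suc2 mult.assoc)
  also have "\<dots> = (if c \<le> a then D ^ (a - c) else Di ^ (c - a)) * Di"
    using Suc by simp
  also have "\<dots> = (if Suc c \<le> a then D ^ (a - Suc c) else Di ^ (Suc c - a))"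
  proof (cases "Suc c \<le> a")
    case True
    then have "a - c = Suc (a - Suc c)" by simp
    then have "D ^ (a - c) * Di = D ^ (a - Suc c) * (D * Di)"
      by (simp only: power_Suc2 mult.assoc)
    with True assms show ?thesis by simp
  next
    case False
    then have "Suc c - a = Suc (c - a)" by simp
    with False show ?thesis by (auto simp: power_Suc2 le_Suc_eq power_commutes)
  qed
  finally show ?case .
qed simp

lemma zpow_add:
  fixes D Di :: "'a::ring_1"
  assumes right_inverse: "D * Di = 1" and left_inverse: "Di * D = 1"
  shows "zpow D Di a * zpow D Di b = zpow D Di (a + b)"
proof -
  consider "0 \<le> a" "0 \<le> b" | "0 \<le> a" "b < 0" | "a < 0" "0 \<le> b" | "a < 0" "b < 0"
    by linarith
  then show ?thesis
  proof cases
    case 1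
    then show ?thesis by (simp add: zpow_def power_add[symmetric] nat_add_distrib)
  next
    case 2
    then show ?thesis
      by (auto simp: zpow_def power_mult_inverse_power[OF right_inverse] nat_diff_distrib'
          intro: arg_cong[where f="power _"])
  next
    case 3
    then show ?thesis
      by (auto simp: zpow_def power_mult_inverse_power[OF left_inverse] nat_diff_distrib'
          intro: arg_cong[where f="power _"])
  next
    case 4
    then have "nat (- a - b) = nat (- a) + nat (- b)" by simp
    with 4 show ?thesis by (simp add: zpow_def power_add[symmetric])
  qed
qed

lemma wedge_sum_right:
  "(\<Sum>s<n. wedge x (a s)) = wedge x (\<Sum>s<n. fst (a s), \<Sum>s<n. snd (a s))"
  by (simp add: wedge_def sum_distrib_left sum_subtractf)

lemma quantum_torus_mult:
  fixes e :: "complex \<Rightarrow> 'a::ring_1"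
    and T :: "int \<times> int \<Rightarrow> 'a"
  assumes emb: "central_scalar_emb e"
    and q_nz: "q \<noteq> 0"
    and sqrt_q: "h ^ 2 = q"
    and Dx_inv: "Dx * Dxi = 1" "Dxi * Dx = 1"
    and Dy_inv: "Dy * Dyi = 1" "Dyi * Dy = 1"
    and comm: "\<And>a b::int. zpow Dx Dxi a * zpow Dy Dyi b
                 = e (q powi (a * b)) * (zpow Dy Dyi b * zpow Dx Dxi a)"
    and T_def: "\<And>m. T m = e (h powi (fst m * snd m)) * (zpow Dy Dyi (fst m) * zpow Dx Dxi (snd m))"
  shows "T m * T p = e (h powi wedge p m) * T (fst m + fst p, snd m + snd p)"
proof -
  obtain m1 m2 p1 p2 where m: "m = (m1, m2)" and p: "p = (p1, p2)"
    by fastforce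
  define X where "X a = zpow Dx Dxi a" for a
  define Y where "Y b = zpow Dy Dyi b" for b
  have scalar_left: "A * (e c * B) = e c * (A * B)" for c A B
    by (metis central_scalar_emb_commute[OF emb] mult.assoc)
  have "T m * T p = e (h powi (m1 * m2)) * e (h powi (p1 * p2)) * (Y m1 * (X m2 * Y p1) * X p2)"
    unfolding T_def m p fst_conv snd_conv X_def[symmetric] Y_def[symmetric]
    by (simp add: scalar_left[of "X m2"] scalar_left[of "Y m1"] mult.assoc)
  also have "X m2 * Y p1 = e (q powi (m2 * p1)) * (Y p1 * X m2)"
    unfolding X_def Y_def by (rule comm)
  also have "Y m1 * (e (q powi (m2 * p1)) * (Y p1 * X m2)) * X p2
      = e (q powi (m2 * p1)) * ((Y m1 * Y p1) * (X m2 * X p2))"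
    by (simp add: scalar_left[of "Y m1"] mult.assoc)
  also have "(Y m1 * Y p1) * (X m2 * X p2) = Y (m1 + p1) * X (m2 + p2)"
    unfolding X_def Y_def by (simp add: zpow_add Dx_inv Dy_inv)
  finally have "T m * T p = e (h powi (m1 * m2) * h powi (p1 * p2) * q powi (m2 * p1))
      * (Y (m1 + p1) * X (m2 + p2))"
    by (simp add: central_scalar_emb_mult[OF emb] mult.assoc)
  also have "h powi (m1 * m2) * h powi (p1 * p2) * q powi (m2 * p1)
      = h powi wedge p m * h powi ((m1 + p1) * (m2 + p2))"
  proof -
    have h_nz: "h \<noteq> 0"
      using q_nz sqrt_q by auto
    have "q powi (m2 * p1) = h powi (2 * (m2 * p1))"
      using sqrt_q by (metis power_int_power of_nat_numeral)
    moreover have "m1 * m2 + p1 * p2 + 2 * (m2 * p1) = wedge p m + (m1 + p1) * (m2 + p2)"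
      by (simp add: wedge_def m p algebra_simps)
    ultimately show ?thesis
      by (simp add: power_int_add[symmetric] h_nz)
  qed
  finally show ?thesis
    unfolding T_def m p X_def Y_def by (simp add: central_scalar_emb_mult[OF emb] mult.assoc)
qed

lemma prod_list_twisted_mult:
  fixes e :: "complex \<Rightarrow> 'a::ring_1"
    and T :: "int \<times> int \<Rightarrow> 'a"
  assumes emb: "central_scalar_emb e"
    and h_nz: "h \<noteq> 0"
    and T_zero: "T (0, 0) = 1"
    and T_mult: "\<And>m p. T m * T p = e (h powi wedge p m) * T (fst m + fst p, snd m + snd p)"
  shows "prod_list (map (\<lambda>k. T (a k)) [0..<N])
    = e (h powi (\<Sum>k<N. \<Sum>s<k. wedge (a k) (a s))) * T (\<Sum>k<N. fst (a k), \<Sum>k<N. snd (a k))"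
proof (induction N)
  case 0
  show ?case
    by (simp add: T_zero central_scalar_emb_one[OF emb])
next
  case (Suc N)
  let ?S = "(\<Sum>k<N. fst (a k), \<Sum>k<N. snd (a k))"
  let ?W = "\<Sum>k<N. \<Sum>s<k. wedge (a k) (a s)"
  have "prod_list (map (\<lambda>k. T (a k)) [0..<Suc N]) = e (h powi ?W) * (T ?S * T (a N))"
    using Suc by (simp add: mult.assoc)
  also have "\<dots> = e (h powi (?W + wedge (a N) ?S)) * T (fst ?S + fst (a N), snd ?S + snd (a N))"
    by (simp add: T_mult power_int_add h_nz central_scalar_emb_mult[OF emb] mult.assoc)
  also have "?W + wedge (a N) ?S = (\<Sum>k<Suc N. \<Sum>s<k. wedge (a k) (a s))"
    by (simp add: wedge_sum_right)
  finally show ?case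
    by simp
qed

theorem theorem5:
  fixes e :: "complex \<Rightarrow> 'a::ring_1"
    and q h :: complex
    and Dx Dxi Dy Dyi :: 'a
    and T :: "int \<times> int \<Rightarrow> 'a"
    and n :: nat
    and i :: "nat \<Rightarrow> int \<times> int"
  assumes alg: "central_scalar_emb e"
    and q_nz: "q \<noteq> 0"
    and sqrt_q: "h ^ 2 = q"
    and Dx_inv: "Dx * Dxi = 1" "Dxi * Dx = 1"
    and Dy_inv: "Dy * Dyi = 1" "Dyi * Dy = 1"
    and comm: "\<And>a b::int. zpow Dx Dxi a * zpow Dy Dyi b
                 = e (q powi (a * b)) * (zpow Dy Dyi b * zpow Dx Dxi a)"
    and T_def: "\<And>m. T m = e (h powi (fst m * snd m)) * (zpow Dy Dyi (fst m) * zpow Dx Dxi (snd m))"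
    and n2: "n \<ge> 2"
  shows "nbr (map (\<lambda>k. T (i k)) [0..<n])
       = (\<Sum>\<sigma> | \<sigma> permutes {..<n}.
            e (of_int (sign \<sigma>) * h powi (\<Sum>k<n. \<Sum>s<k. wedge (i (\<sigma> k)) (i (\<sigma> s))))
            * T (\<Sum>k<n. fst (i k), \<Sum>k<n. snd (i k)))"
proof -
  have T_zero: "T (0, 0) = 1"
    by (simp add: T_def zpow_def central_scalar_emb_one[OF alg])
  have h_nz: "h \<noteq> 0"
    using q_nz sqrt_q by auto
  note prod_T = prod_list_twisted_mult[OF alg h_nz T_zero
      quantum_torus_mult[OF alg q_nz sqrt_q Dx_inv Dy_inv comm T_def]]
  have "nbr (map (\<lambda>k. T (i k)) [0..<n])
      = (\<Sum>\<sigma> | \<sigma> permutes {..<n}. of_int (sign \<sigma>) * prod_list (map (\<lambda>k. T (i (\<sigma> k))) [0..<n]))"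
    using n2 by (simp add: nbr_eq_alternating_prod alternating_prod_map_upt)
  also have "\<dots> = (\<Sum>\<sigma> | \<sigma> permutes {..<n}.
            e (of_int (sign \<sigma>) * h powi (\<Sum>k<n. \<Sum>s<k. wedge (i (\<sigma> k)) (i (\<sigma> s))))
            * T (\<Sum>k<n. fst (i k), \<Sum>k<n. snd (i k)))"
  proof (rule sum.cong)
    fix \<sigma> assume "\<sigma> \<in> {\<sigma>. \<sigma> permutes {..<n}}"
    then have "(\<Sum>k<n. f (i (\<sigma> k))) = (\<Sum>k<n. f (i k))" for f :: "int \<times> int \<Rightarrow> int"
      using sum.permute[of \<sigma> "{..<n}" "\<lambda>k. f (i k)"] by (simp add: comp_def)
    then show "of_int (sign \<sigma>) * prod_list (map (\<lambda>k. T (i (\<sigma> k))) [0..<n])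
        = e (of_int (sign \<sigma>) * h powi (\<Sum>k<n. \<Sum>s<k. wedge (i (\<sigma> k)) (i (\<sigma> s))))
          * T (\<Sum>k<n. fst (i k), \<Sum>k<n. snd (i k))"
      by (simp add: prod_T central_scalar_emb_mult[OF alg] central_scalar_emb_of_int[OF alg] mult.assoc)
  qed simp
  finally show ?thesis .
qed

end
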